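(* Let $k\ge2$ be an integer and $\Delta=2^k$, and consider the instance $\overline{\mathcal I}$ described below. Then for every $i\in[k]$, every agent in group $G_i$ has weighted maximin share exactly $w_i$. Instance $\overline{\mathcal I}$: agents are partitioned into groups $G_1,\dots,G_k$ with $|G_i|=n_i=\Delta^{i-1}$; all agents in $G_i$ have weight $w_i$ and the same cost function $v_i$, where $w_1=1$ and $w_i=2^{i-2}/n_i$ for $i\ge2$. Items are partitioned into $\mathcal M_1,\dots,\mathcal M_k$ with $|\mathcal M_1|=m_1=1$ and $|\mathcal M_i|=m_i=\tfrac32 n_i$ for $i\ge2$; for $i\ge2$, $\mathcal M_i=\mathcal M_i^1\cup\mathcal M_i^2$ with $|\mathcal M_i^1|=n_i/2$, $|\mathcal M_i^2|=n_i$; $T_i\subseteq\mathcal M_i^1$ is any subset with $|T_i|=n_i/2-(m_1+\cdots+m_{i-1})$, $T_i'=\mathcal M_i^1\setminus T_i$, and $B_i=\mathcal M_1\cup\cdots\cup\mathcal M_{i-1}\cup T_i$. Costs: $v_1(e)=1$ for the unique $e\in\mathcal M_1$; for $1\le j<i$ (with $i\ge 2$), $v_j(e)=w_i$ for $e\in\mathcal M_i^1$ and $v_j(e)=w_i/2$ for $e\in\mathcal M_i^2$; for $i\ge2$, $v_i(e)=2w_i$ for $e\in B_i$, $v_i(e)=0$ for $e\in T_i'$, and $v_i(e)=w_i$ for $e\in\mathcal M_i^2$. All cost functions are additive.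
   Context: For a chore-allocation instance with agents $\mathcal N$, items $\mathcal M$, positive weights $w_a$ and additive costs $v_a$, an allocation is an ordered partition of $\mathcal M$ into one (possibly empty) bundle per agent, and the weighted maximin share of agent $a$ is $\mathsf{WMMS}_a=w_a\cdot\min_{\text{allocations }(B_b)_{b\in\mathcal N}}\max_{b\in\mathcal N}\frac{v_a(B_b)}{w_b}$. (Weights need not be normalized.) One checks that $m_1+\cdots+m_{i-1}\le n_i/2$ so $T_i$ is well defined. *)

theory Defs
  imports Main "HOL-Library.Disjoint_Sets" Complex_Main
begin

definition is_allocation :: "'ag set \<Rightarrow> 'it set \<Rightarrow> ('ag \<Rightarrow> 'it set) \<Rightarrow> bool" where
  "is_allocation N M A \<longleftrightarrow>
     (\<forall>b\<in>N. A b \<subseteq> M) \<and>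
     (\<forall>b\<in>N. \<forall>b'\<in>N. b \<noteq> b' \<longrightarrow> A b \<inter> A b' = {}) \<and>
     (\<Union>b\<in>N. A b) = M \<and>
     (\<forall>b. b \<notin> N \<longrightarrow> A b = {})"

definition wmms :: "'ag set \<Rightarrow> 'it set \<Rightarrow> ('ag \<Rightarrow> real) \<Rightarrow> ('ag \<Rightarrow> 'it \<Rightarrow> real) \<Rightarrow> 'ag \<Rightarrow> real" where
  "wmms N M w c a = w a * Min ((\<lambda>A. Max ((\<lambda>b. (\<Sum>e\<in>A b. c a e) / w b) ` N))
                                  ` {A. is_allocation N M A})"

definition inst_n :: "nat \<Rightarrow> nat \<Rightarrow> nat" where
  "inst_n k i = (2 ^ k) ^ (i - 1)"

definition inst_w :: "nat \<Rightarrow> nat \<Rightarrow> real" where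
  "inst_w k i = (if i = 1 then 1 else 2 ^ (i - 2) / real (inst_n k i))"

definition inst_m :: "nat \<Rightarrow> nat \<Rightarrow> nat" where
  "inst_m k i = (if i = 1 then 1 else 3 * inst_n k i div 2)"

end

theory Submission
  imports Defs
begin

text \<open>Fix an agent \<open>a\<close> of group \<open>G\<^sub>i\<close> and measure everything with its cost function.
  The instance is balanced so that the total cost of all items equals the total weight
  \<open>\<Sum>\<^sub>j n\<^sub>j w\<^sub>j\<close>; hence in every allocation some agent \<open>b\<close> receives cost at least
  \<open>w\<^sub>b\<close>, and the weighted maximin share is at least \<open>w\<^sub>i\<close>. Conversely there is an allocation
  in which every agent \<open>b\<close> receives cost at most \<open>w\<^sub>b\<close>: the higher groups \<open>G\<^sub>j\<close> (\<open>j > i\<close>)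
  share \<open>M\<^sub>j\<close>, half of them one item of \<open>M\<^sub>j\<^sup>1\<close> each and half two items of \<open>M\<^sub>j\<^sup>2\<close>; the
  group \<open>G\<^sub>i\<close> takes one item of \<open>M\<^sub>i\<^sup>2\<close> each, with the worthless items \<open>T\<^sub>i'\<close> added to
  \<open>a\<close>; and the \<open>n\<^sub>i/2\<close> items of \<open>B\<^sub>i\<close>, each of cost \<open>2 w\<^sub>i\<close>, are spread over the lower
  groups, whose weights are multiples of \<open>2 w\<^sub>i\<close> and add up to \<open>n\<^sub>i w\<^sub>i\<close>.\<close>

lemma exists_partition_with_cards:
  assumes "finite S" "finite X" "card X = (\<Sum>b\<in>S. q b)"
  shows "\<exists>P. (\<forall>b\<in>S. P b \<subseteq> X \<and> card (P b) = q b) \<and>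
             disjoint_family_on P S \<and> (\<Union>b\<in>S. P b) = X"
  using assms
proof (induction S arbitrary: X rule: finite_induct)
  case empty
  then show ?case by (simp add: disjoint_family_on_def)
next
  case (insert b S)
  then have "q b \<le> card X" by simp
  then obtain Y where Y: "Y \<subseteq> X" "card Y = q b"
    using obtain_subset_with_card_n by metis
  have rest: "finite (X - Y)" "card (X - Y) = (\<Sum>b\<in>S. q b)"
    using Y insert by (simp_all add: card_Diff_subset finite_subset)
  obtain P where P:
    "\<forall>b\<in>S. P b \<subseteq> X - Y \<and> card (P b) = q b" "disjoint_family_on P S" "(\<Union>b\<in>S. P b) = X - Y"
    using insert.IH[OF rest] by blast
  let ?P = "P(b := Y)"
  have "\<forall>c\<in>S. ?P c = P c"
    using insert.hyps(2) by auto
  then have restrict: "(\<Union>b\<in>S. ?P b) = X - Y" "disjoint_family_on ?P S"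
    using P(2,3) unfolding disjoint_family_on_def by simp_all
  then have "disjoint_family_on ?P (insert b S)"
    using insert.hyps(2) by (simp add: disjoint_family_on_insert)
  moreover have "(\<Union>b\<in>insert b S. ?P b) = X"
    using restrict Y insert.hyps(2) by auto
  moreover have "\<forall>c\<in>insert b S. ?P c \<subseteq> X \<and> card (?P c) = q c"
    using P(1) Y insert.hyps(2) by auto
  ultimately show ?case
    by blast
qed

lemma disjoint_family_on_UN_disjoint:
  assumes "disjoint_family_on F K" "I \<subseteq> K" "J \<subseteq> K" "I \<inter> J = {}"
  shows "(\<Union>i\<in>I. F i) \<inter> (\<Union>j\<in>J. F j) = {}"
  using assms unfolding disjoint_family_on_def by fastforce

lemma disjoint_family_on_UN_below:
  fixes i k :: nat
  assumes "disjoint_family_on F {1..k}" "i \<in> {1..k}"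
  shows "(\<Union>j\<in>{1..<i}. F j) \<inter> F i = {}"
proof -
  have "{1..<i} \<subseteq> {1..k}" "{i} \<subseteq> {1..k}" "{1..<i} \<inter> {i} = {}"
    using assms(2) by auto
  from disjoint_family_on_UN_disjoint[OF assms(1) this] show ?thesis
    by simp
qed

definition allocable_within :: "('it \<Rightarrow> real) \<Rightarrow> ('ag \<Rightarrow> real) \<Rightarrow> 'ag set \<Rightarrow> 'it set \<Rightarrow> bool" where
  "allocable_within v w N X \<longleftrightarrow> (\<exists>A. is_allocation N X A \<and> (\<forall>b\<in>N. sum v (A b) \<le> w b))"

lemma allocable_within_uniform:
  assumes "finite S" "finite X" "card X = (\<Sum>b\<in>S. q b)"
    and "\<forall>b\<in>S. w b \<ge> 0" and "\<forall>b\<in>S. \<forall>e\<in>X. real (q b) * v e \<le> w b"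
  shows "allocable_within v w S X"
proof -
  obtain P where P: "\<forall>b\<in>S. P b \<subseteq> X \<and> card (P b) = q b"
    "disjoint_family_on P S" "(\<Union>b\<in>S. P b) = X"
    using exists_partition_with_cards[OF assms(1-3)] by blast
  define A where "A b = (if b \<in> S then P b else {})" for b
  have "is_allocation S X A"
    unfolding is_allocation_def A_def using P(1,3) disjoint_family_onD[OF P(2)] by auto
  moreover have "sum v (A b) \<le> w b" if b: "b \<in> S" for b
  proof (cases "q b = 0")
    case True
    then have "P b = {}"
      using P(1) b assms(2) by (metis card_0_eq finite_subset)
    then show ?thesis
      using b assms(4) by (simp add: A_def)
  next
    case False
    have "real (q b) * sum v (P b) = (\<Sum>e\<in>P b. real (q b) * v e)"
      by (simp add: sum_distrib_left)
    also have "\<dots> \<le> (\<Sum>e\<in>P b. w b)"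
      using assms(5) P(1) b by (intro sum_mono) blast
    also have "\<dots> = real (q b) * w b"
      using P(1) b by simp
    finally show ?thesis
      using b False by (simp add: A_def)
  qed
  ultimately show ?thesis
    unfolding allocable_within_def by blast
qed

lemma allocable_within_empty: "allocable_within v w {} {}"
  unfolding allocable_within_def is_allocation_def by auto

lemma is_allocation_disjoint:
  assumes "is_allocation N X A" "b \<noteq> b'"
  shows "A b \<inter> A b' = {}"
  using assms unfolding is_allocation_def by (cases "b \<in> N \<and> b' \<in> N") auto

lemma is_allocation_subset:
  assumes "is_allocation N X A"
  shows "A b \<subseteq> X"
  using assms unfolding is_allocation_def by (cases "b \<in> N") auto

lemma allocable_within_Un:
  assumes "allocable_within v w N1 X1" "allocable_within v w N2 X2"
    and "N1 \<inter> N2 = {}" "X1 \<inter> X2 = {}"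
  shows "allocable_within v w (N1 \<union> N2) (X1 \<union> X2)"
proof -
  obtain A1 where A1: "is_allocation N1 X1 A1" "\<forall>b\<in>N1. sum v (A1 b) \<le> w b"
    using assms(1) unfolding allocable_within_def by blast
  obtain A2 where A2: "is_allocation N2 X2 A2" "\<forall>b\<in>N2. sum v (A2 b) \<le> w b"
    using assms(2) unfolding allocable_within_def by blast
  have outside: "b \<notin> N1 \<Longrightarrow> A1 b = {}" "b \<notin> N2 \<Longrightarrow> A2 b = {}" for b
    using A1(1) A2(1) unfolding is_allocation_def by blast+
  have "(A1 b \<union> A2 b) \<inter> (A1 b' \<union> A2 b') = {}" if "b \<noteq> b'" for b b'
    using is_allocation_disjoint[OF A1(1) that] is_allocation_disjoint[OF A2(1) that]
      is_allocation_subset[OF A1(1)] is_allocation_subset[OF A2(1)] assms(4) by blast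
  moreover have "(\<Union>b\<in>N1 \<union> N2. A1 b \<union> A2 b) = X1 \<union> X2"
    using A1(1) A2(1) outside unfolding is_allocation_def by auto
  ultimately have "is_allocation (N1 \<union> N2) (X1 \<union> X2) (\<lambda>b. A1 b \<union> A2 b)"
    unfolding is_allocation_def
    using outside is_allocation_subset[OF A1(1)] is_allocation_subset[OF A2(1)]
    by (intro conjI) (blast, blast, simp, simp)
  moreover have "sum v (A1 b \<union> A2 b) \<le> w b" if "b \<in> N1 \<union> N2" for b
  proof (cases "b \<in> N1")
    case True
    then have "b \<notin> N2" using assms(3) by blast
    then show ?thesis using A1(2) outside(2) True by simp
  next
    case False
    then show ?thesis using A2(2) outside(1)[of b] that by auto
  qed
  ultimately show ?thesis
    unfolding allocable_within_def by blast
qed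

lemma allocable_within_UN:
  assumes "finite J" "disjoint_family_on NS J" "disjoint_family_on XS J"
    and "\<forall>j\<in>J. allocable_within v w (NS j) (XS j)"
  shows "allocable_within v w (\<Union>j\<in>J. NS j) (\<Union>j\<in>J. XS j)"
  using assms
proof (induction J rule: finite_induct)
  case empty
  then show ?case using allocable_within_empty by simp
next
  case (insert j J)
  then have "NS j \<inter> (\<Union>j\<in>J. NS j) = {}" "XS j \<inter> (\<Union>j\<in>J. XS j) = {}"
    and "allocable_within v w (\<Union>j\<in>J. NS j) (\<Union>j\<in>J. XS j)"
    and "allocable_within v w (NS j) (XS j)"
    by (simp_all add: disjoint_family_on_insert)
  then show ?case
    using allocable_within_Un by simp
qed

lemma allocable_within_add_free_items:
  assumes "allocable_within v w N X" "a \<in> N" "finite X" "finite Y" "X \<inter> Y = {}"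
    and "\<forall>e\<in>Y. v e = 0"
  shows "allocable_within v w N (X \<union> Y)"
proof -
  obtain A where A: "is_allocation N X A" "\<forall>b\<in>N. sum v (A b) \<le> w b"
    using assms(1) unfolding allocable_within_def by blast
  have "A a \<subseteq> X"
    using is_allocation_subset[OF A(1)] .
  then have "sum v (A a \<union> Y) = sum v (A a)"
    using assms(3-6) finite_subset by (subst sum.union_disjoint) auto
  moreover have "is_allocation N (X \<union> Y) (A(a := A a \<union> Y))"
    using A(1) assms(2,5) is_allocation_subset[OF A(1)] is_allocation_disjoint[OF A(1)]
    unfolding is_allocation_def by auto (metis IntI empty_iff)+
  moreover have "\<forall>b\<in>N. sum v ((A(a := A a \<union> Y)) b) \<le> w b"
    using A(2) calculation(1) by simp
  ultimately show ?thesis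
    unfolding allocable_within_def by blast
qed

lemma finite_allocations:
  assumes "finite N" "finite X"
  shows "finite {A. is_allocation N X A}"
proof -
  have "inj_on (\<lambda>A. restrict A N) {A. is_allocation N X A}"
  proof (rule inj_onI, rule ext)
    fix A B x
    assume "A \<in> {A. is_allocation N X A}" "B \<in> {A. is_allocation N X A}"
      and "restrict A N = restrict B N"
    then show "A x = B x"
      unfolding is_allocation_def by (cases "x \<in> N") (metis restrict_apply', simp)
  qed
  moreover have "(\<lambda>A. restrict A N) ` {A. is_allocation N X A} \<subseteq> PiE N (\<lambda>_. Pow X)"
    unfolding is_allocation_def by auto
  ultimately show ?thesis
    using assms finite_PiE[of N "\<lambda>_. Pow X"] by (meson finite_Pow_iff finite_imageD finite_subset)
qed

lemma sum_over_allocation: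
  assumes "is_allocation N X A" "finite N" "finite X"
  shows "sum v X = (\<Sum>b\<in>N. sum v (A b))"
proof -
  have "X = (\<Union>b\<in>N. A b)"
    using assms(1) unfolding is_allocation_def by simp
  moreover have "finite (A b)" for b
    using is_allocation_subset[OF assms(1)] assms(3) by (rule finite_subset)
  ultimately show ?thesis
    using assms(2) is_allocation_disjoint[OF assms(1)] by (simp add: sum.UNION_disjoint)
qed

text \<open>The total-cost hypothesis forces some bundle of every allocation to cost at least its
  owner's weight, so the inner maximum is never below 1; the allocation given by
  \<open>allocable_within\<close> attains 1.\<close>
lemma wmms_eq_weight:
  assumes "finite N" "finite X" "a \<in> N" "\<forall>b\<in>N. w b > 0"
    and "allocable_within (c a) w N X" "sum w N \<le> sum (c a) X"
  shows "wmms N X w c a = w a"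
proof -
  let ?ratio = "\<lambda>A. Max ((\<lambda>b. (\<Sum>e\<in>A b. c a e) / w b) ` N)"
  have ratio_ge: "1 \<le> ?ratio A" if A: "is_allocation N X A" for A
  proof -
    have "\<exists>b\<in>N. w b \<le> sum (c a) (A b)"
    proof (rule ccontr)
      assume "\<not> ?thesis"
      then have "(\<Sum>b\<in>N. sum (c a) (A b)) < sum w N"
        using assms(1,3) by (intro sum_strict_mono) auto
      then show False
        using sum_over_allocation[OF A assms(1,2), of "c a"] assms(6) by simp
    qed
    then obtain b where b: "b \<in> N" "w b \<le> sum (c a) (A b)" by blast
    then have "1 \<le> sum (c a) (A b) / w b"
      using assms(4) by simp
    also have "\<dots> \<le> ?ratio A"
      using b assms(1) by (intro Max_ge) auto
    finally show ?thesis .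
  qed
  obtain A where A: "is_allocation N X A" "\<forall>b\<in>N. sum (c a) (A b) \<le> w b"
    using assms(5) unfolding allocable_within_def by blast
  have "?ratio A \<le> 1"
    using assms(1,3,4) A(2) by (subst Max_le_iff) auto
  then have "?ratio A = 1"
    using ratio_ge[OF A(1)] by simp
  then have "Min (?ratio ` {A. is_allocation N X A}) = 1"
    using A(1) ratio_ge finite_allocations[OF assms(1,2)] by (intro Min_eqI) force+
  then show ?thesis
    unfolding wmms_def by simp
qed

lemma inst_w_pos: "0 < inst_w k i"
  unfolding inst_w_def inst_n_def by simp

lemma even_inst_n: "1 \<le> k \<Longrightarrow> 2 \<le> i \<Longrightarrow> even (inst_n k i)"
  unfolding inst_n_def by (simp add: dvd_power)

lemma inst_n_mult_inst_w: "real (inst_n k i) * inst_w k i = (if i = 1 then 1 else 2 ^ (i - 2))"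
  unfolding inst_w_def inst_n_def by simp

lemma sum_inst_n_mult_inst_w_below:
  assumes "2 \<le> i"
  shows "(\<Sum>j\<in>{1..<i}. real (inst_n k j) * inst_w k j) = real (inst_n k i) * inst_w k i"
  using assms
proof (induction i rule: dec_induct)
  case base
  then show ?case by (simp add: inst_n_mult_inst_w)
next
  case (step i)
  then have "{1..<Suc i} = insert i {1..<i}" by auto
  with step show ?case
    by (simp add: inst_n_mult_inst_w power_Suc[symmetric] del: power_Suc)
qed

lemma inst_n_Suc: "1 \<le> i \<Longrightarrow> inst_n k (Suc i) = 2 ^ k * inst_n k i"
  unfolding inst_n_def by (simp add: power_eq_if)

lemma sum_inst_m_below_le:
  assumes "2 \<le> k" "2 \<le> i"
  shows "(\<Sum>j\<in>{1..<i}. inst_m k j) \<le> inst_n k i div 2"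
  using assms(2)
proof (induction i rule: dec_induct)
  case base
  have "(2::nat) \<le> 2 ^ k"
    using assms(1) by (metis le_trans one_le_numeral power_increasing power_one_right)
  then show ?case by (simp add: inst_m_def inst_n_def)
next
  case (step i)
  have "(4::nat) \<le> 2 ^ k"
    using assms(1) power_increasing[of 2 k "2::nat"] by simp
  then have "4 * inst_n k i \<le> inst_n k (Suc i)"
    using step.hyps inst_n_Suc[of i k] by simp
  moreover have "{1..<Suc i} = insert i {1..<i}"
    using step.hyps by auto
  ultimately show ?case
    using step by (simp add: inst_m_def)
qed

lemma inst_w_multiple:
  assumes "2 \<le> k" "1 \<le> j" "j < i"
  shows "\<exists>q::nat. inst_w k j = real q * (2 * inst_w k i)"
proof -
  define h :: nat where "h = 2 ^ (k - 1)"
  have w_eq: "inst_w k l = 1 / (2 * real h ^ (l - 1))" if l: "2 \<le> l" for l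
  proof -
    obtain l' where "l = 2 + l'"
      using le_Suc_ex[OF l] by blast
    moreover obtain k' where "k = 1 + k'"
      using le_Suc_ex[of 1 k] assms(1) by auto
    ultimately show ?thesis
      unfolding inst_w_def inst_n_def h_def by (simp add: power_mult_distrib field_simps power_add)
  qed
  have "0 < h" unfolding h_def by simp
  show ?thesis
  proof (cases "j = 1")
    case True
    then show ?thesis
      using w_eq[of i] assms \<open>0 < h\<close> by (intro exI[of _ "h ^ (i - 1)"]) (simp add: inst_w_def)
  next
    case False
    have h_even: "2 * (h div 2) = h"
      unfolding h_def using assms(1) by (simp add: dvd_power)
    have "2 * ((h div 2) * h ^ (i - j - 1)) * h ^ (j - 1) = h ^ (i - 1)"
    proof -
      have "1 + (i - j - 1) + (j - 1) = i - 1" using assms by simp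
      then show ?thesis
        by (metis h_even mult.assoc power_add power_one_right)
    qed
    then have "2 * real ((h div 2) * h ^ (i - j - 1)) * real h ^ (j - 1) = real h ^ (i - 1)"
      by (metis of_nat_mult of_nat_numeral of_nat_power)
    moreover have ij: "2 \<le> j" "2 \<le> i"
      using assms False by auto
    ultimately show ?thesis
      unfolding w_eq[OF ij(1)] w_eq[OF ij(2)] using \<open>0 < h\<close>
      by (intro exI[of _ "(h div 2) * h ^ (i - j - 1)"]) (simp add: field_simps)
  qed
qed

locale wmms_instance =
  fixes k :: nat
    and N :: "'ag set" and G :: "nat \<Rightarrow> 'ag set"
    and M :: "'it set" and Ms M1 M2 T :: "nat \<Rightarrow> 'it set"
    and w :: "'ag \<Rightarrow> real" and c :: "'ag \<Rightarrow> 'it \<Rightarrow> real"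
  assumes k2: "k \<ge> 2"
    and N_def: "N = (\<Union>i\<in>{1..k}. G i)"
    and G_disj: "disjoint_family_on G {1..k}"
    and G_card: "\<forall>i\<in>{1..k}. finite (G i) \<and> card (G i) = inst_n k i"
    and w_G: "\<forall>i\<in>{1..k}. \<forall>a\<in>G i. w a = inst_w k i"
    and M_def: "M = (\<Union>i\<in>{1..k}. Ms i)"
    and Ms_disj: "disjoint_family_on Ms {1..k}"
    and Ms1_card: "finite (Ms 1) \<and> card (Ms 1) = inst_m k 1"
    and Ms_split: "\<forall>i\<in>{2..k}. Ms i = M1 i \<union> M2 i \<and> M1 i \<inter> M2 i = {}"
    and M1_card: "\<forall>i\<in>{2..k}. finite (M1 i) \<and> card (M1 i) = inst_n k i div 2"
    and M2_card: "\<forall>i\<in>{2..k}. finite (M2 i) \<and> card (M2 i) = inst_n k i"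
    and T_sub: "\<forall>i\<in>{2..k}. T i \<subseteq> M1 i \<and>
                  card (T i) = inst_n k i div 2 - (\<Sum>j\<in>{1..<i}. inst_m k j)"
    and c_1_1: "\<forall>a\<in>G 1. \<forall>e\<in>Ms 1. c a e = 1"
    and c_lt1: "\<forall>i\<in>{2..k}. \<forall>j\<in>{1..<i}. \<forall>a\<in>G j. \<forall>e\<in>M1 i. c a e = inst_w k i"
    and c_lt2: "\<forall>i\<in>{2..k}. \<forall>j\<in>{1..<i}. \<forall>a\<in>G j. \<forall>e\<in>M2 i. c a e = inst_w k i / 2"
    and c_B: "\<forall>i\<in>{2..k}. \<forall>a\<in>G i.
                \<forall>e\<in>(\<Union>j\<in>{1..<i}. Ms j) \<union> T i. c a e = 2 * inst_w k i"
    and c_T': "\<forall>i\<in>{2..k}. \<forall>a\<in>G i. \<forall>e\<in>M1 i - T i. c a e = 0"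
    and c_M2: "\<forall>i\<in>{2..k}. \<forall>a\<in>G i. \<forall>e\<in>M2 i. c a e = inst_w k i"
begin

lemma finite_M1_M2:
  assumes "i \<in> {2..k}"
  shows "finite (M1 i)" "finite (M2 i)"
  using assms M1_card M2_card by auto

lemma finite_G: "j \<in> {1..k} \<Longrightarrow> finite (G j)"
  and card_G: "j \<in> {1..k} \<Longrightarrow> card (G j) = inst_n k j"
  and weight_G: "j \<in> {1..k} \<Longrightarrow> b \<in> G j \<Longrightarrow> w b = inst_w k j"
  using G_card w_G by auto

lemma Ms_eq: "i \<in> {2..k} \<Longrightarrow> Ms i = M1 i \<union> M2 i"
  and M1_M2_disjoint: "i \<in> {2..k} \<Longrightarrow> M1 i \<inter> M2 i = {}"
  and T_subset: "i \<in> {2..k} \<Longrightarrow> T i \<subseteq> M1 i"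
  using Ms_split T_sub by auto

lemma finite_Ms: "j \<in> {1..k} \<Longrightarrow> finite (Ms j)"
  using Ms1_card Ms_split finite_M1_M2 by (cases "j = 1") auto

lemma card_Ms:
  assumes "j \<in> {1..k}"
  shows "card (Ms j) = inst_m k j"
proof (cases "j = 1")
  case True
  then show ?thesis using Ms1_card by simp
next
  case False
  then have j: "j \<in> {2..k}" using assms by auto
  then have "card (Ms j) = inst_n k j div 2 + inst_n k j"
    using Ms_split M1_card M2_card by (simp add: card_Un_disjoint)
  then show ?thesis
    using even_inst_n[of k j] k2 j False by (simp add: inst_m_def)
qed

lemma finite_N: "finite N"
  unfolding N_def using G_card by blast

lemma finite_M: "finite M"
  unfolding M_def using finite_Ms by blast

lemma weight_pos: "\<forall>b\<in>N. 0 < w b"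
  unfolding N_def using w_G inst_w_pos by fastforce

lemma sum_weight_groups:
  assumes "J \<subseteq> {1..k}"
  shows "sum w (\<Union>j\<in>J. G j) = (\<Sum>j\<in>J. real (inst_n k j) * inst_w k j)"
proof -
  have "sum w (\<Union>j\<in>J. G j) = (\<Sum>j\<in>J. sum w (G j))"
    using disjoint_family_on_mono[OF assms G_disj] assms G_card finite_subset[OF assms]
    unfolding disjoint_family_on_def by (intro sum.UNION_disjoint) auto
  also have "\<dots> = (\<Sum>j\<in>J. real (inst_n k j) * inst_w k j)"
    using assms G_card w_G by (intro sum.cong) auto
  finally show ?thesis .
qed

lemma sum_cost_blocks:
  assumes "J \<subseteq> {1..k}"
  shows "sum v (\<Union>j\<in>J. Ms j) = (\<Sum>j\<in>J. sum v (Ms j))"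
  using disjoint_family_on_mono[OF assms Ms_disj] assms finite_Ms finite_subset[OF assms]
  unfolding disjoint_family_on_def by (intro sum.UNION_disjoint) auto

definition B :: "nat \<Rightarrow> 'it set" where
  "B i = (\<Union>j\<in>{1..<i}. Ms j) \<union> T i"

lemma finite_B: "i \<in> {2..k} \<Longrightarrow> finite (B i)"
  unfolding B_def using finite_Ms T_sub finite_M1_M2 finite_subset by fastforce

lemma card_B:
  assumes "i \<in> {2..k}"
  shows "card (B i) = inst_n k i div 2"
proof -
  have "card (\<Union>j\<in>{1..<i}. Ms j) = (\<Sum>j\<in>{1..<i}. inst_m k j)"
    using assms finite_Ms card_Ms disjoint_family_onD[OF Ms_disj]
    by (subst card_UN_disjoint) auto
  moreover have "(\<Union>j\<in>{1..<i}. Ms j) \<inter> T i = {}"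
    using disjoint_family_on_UN_below[OF Ms_disj, of i] assms T_subset[of i] Ms_eq[of i] by auto
  moreover have "finite (T i)"
    using assms T_sub finite_M1_M2 finite_subset by blast
  ultimately show ?thesis
    unfolding B_def using assms finite_Ms T_sub sum_inst_m_below_le[OF k2, of i]
    by (simp add: card_Un_disjoint)
qed

lemma lower_blocks_eq:
  assumes "i \<in> {2..k}"
  shows "(\<Union>j\<in>{1..i}. Ms j) = B i \<union> (M1 i - T i) \<union> M2 i"
proof -
  have "{1..i} = insert i {1..<i}"
    using assms by auto
  then show ?thesis
    unfolding B_def using assms Ms_split T_sub by auto
qed

lemma lower_blocks_disjoint_parts:
  assumes "i \<in> {2..k}"
  shows "B i \<inter> (M1 i - T i) = {}" "(B i \<union> (M1 i - T i)) \<inter> M2 i = {}"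
  unfolding B_def
  using assms disjoint_family_on_UN_below[OF Ms_disj, of i] Ms_eq[of i] M1_M2_disjoint[of i] T_subset[of i]
  by auto

context
  fixes i a
  assumes i: "i \<in> {1..k}" and a: "a \<in> G i"
begin

lemma cost_higher_block:
  assumes j: "j \<in> {i<..k}"
  shows "sum (c a) (Ms j) = real (inst_n k j) * inst_w k j"
proof -
  have j2: "j \<in> {2..k}" and ij: "i \<in> {1..<j}"
    using i j by auto
  have "sum (c a) (Ms j) = sum (c a) (M1 j) + sum (c a) (M2 j)"
    using j2 Ms_split finite_M1_M2 by (simp add: sum.union_disjoint)
  also have "\<dots> = real (inst_n k j div 2) * inst_w k j + real (inst_n k j) * (inst_w k j / 2)"
  proof -
    have "sum (c a) (M1 j) = (\<Sum>e\<in>M1 j. inst_w k j)"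
      using j2 ij a c_lt1 by (intro sum.cong) auto
    moreover have "sum (c a) (M2 j) = (\<Sum>e\<in>M2 j. inst_w k j / 2)"
      using j2 ij a c_lt2 by (intro sum.cong) auto
    ultimately show ?thesis
      using j2 M1_card M2_card by simp
  qed
  also have "\<dots> = real (inst_n k j) * inst_w k j"
    using even_inst_n[of k j] k2 j2 by (simp add: real_of_nat_div)
  finally show ?thesis .
qed

lemma cost_lower_blocks:
  "sum (c a) (\<Union>j\<in>{1..i}. Ms j) = (\<Sum>j\<in>{1..i}. real (inst_n k j) * inst_w k j)"
proof (cases "i = 1")
  case True
  then obtain e where "Ms 1 = {e}"
    using Ms1_card by (auto simp: inst_m_def card_1_singleton_iff)
  then show ?thesis
    using True a c_1_1 by (simp add: inst_w_def inst_n_def)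
next
  case False
  then have i2: "i \<in> {2..k}" using i by auto
  have "sum (c a) (\<Union>j\<in>{1..i}. Ms j) = sum (c a) (B i) + sum (c a) (M1 i - T i) + sum (c a) (M2 i)"
    unfolding lower_blocks_eq[OF i2] using i2 finite_B finite_M1_M2 lower_blocks_disjoint_parts
    by (simp add: sum.union_disjoint)
  also have "\<dots> = real (inst_n k i div 2) * (2 * inst_w k i) + real (inst_n k i) * inst_w k i"
    using i2 a c_B c_T' c_M2 card_B M2_card unfolding B_def by simp
  also have "\<dots> = (\<Sum>j\<in>{1..<i}. real (inst_n k j) * inst_w k j) + real (inst_n k i) * inst_w k i"
    using even_inst_n[of k i] k2 i2 sum_inst_n_mult_inst_w_below[of i k] by (simp add: real_of_nat_div)
  also have "\<dots> = (\<Sum>j\<in>{1..i}. real (inst_n k j) * inst_w k j)"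
    using i2 by (simp add: atLeastLessThanSuc_atLeastAtMost[symmetric])
  finally show ?thesis .
qed

lemma allocable_higher_block:
  assumes j: "j \<in> {i<..k}"
  shows "allocable_within (c a) w (G j) (Ms j)"
proof -
  have j1: "j \<in> {1..k}" and j2: "j \<in> {2..k}" and ij: "i \<in> {1..<j}"
    using i j by auto
  have G: "finite (G j)" "card (G j) = inst_n k j" and w_j: "\<forall>b\<in>G j. w b = inst_w k j"
    using G_card w_G j1 by auto
  obtain H where H: "H \<subseteq> G j" "card H = inst_n k j div 2"
    using obtain_subset_with_card_n[of "inst_n k j div 2" "G j"] G(2) by auto
  have "card (G j - H) = inst_n k j - inst_n k j div 2"
    using H G by (simp add: card_Diff_subset finite_subset)
  also have "\<dots> = inst_n k j div 2"
    using even_inst_n[of k j] k2 j2 by (auto elim!: evenE)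
  finally have card_rest: "card (G j - H) = inst_n k j div 2" .
  have c1: "\<forall>e\<in>M1 j. c a e = inst_w k j" and c2: "\<forall>e\<in>M2 j. c a e = inst_w k j / 2"
    using c_lt1 c_lt2 j2 ij a by blast+
  have "allocable_within (c a) w H (M1 j)"
    using H G j2 M1_card w_j c1 inst_w_pos[of k j] finite_subset
    by (intro allocable_within_uniform[where q = "\<lambda>_. 1"]) auto
  moreover have "allocable_within (c a) w (G j - H) (M2 j)"
    using card_rest G j2 M2_card w_j c2 inst_w_pos[of k j] even_inst_n[of k j] k2
    by (intro allocable_within_uniform[where q = "\<lambda>_. 2"]) auto
  ultimately have "allocable_within (c a) w (H \<union> (G j - H)) (M1 j \<union> M2 j)"
    using M1_M2_disjoint[OF j2] by (intro allocable_within_Un) auto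
  then show ?thesis
    using H(1) Ms_eq[OF j2] by (simp add: Un_absorb1)
qed

text \<open>Each lower weight is a whole multiple of the cost \<open>2 w\<^sub>i\<close> of an item of \<open>B i\<close>, so
  \<open>B i\<close> can be cut into pieces that fill every lower agent exactly.\<close>
lemma allocable_B:
  assumes i2: "i \<in> {2..k}"
  shows "allocable_within (c a) w (\<Union>j\<in>{1..<i}. G j) (B i)"
proof -
  have "\<forall>j\<in>{1..<i}. \<exists>q::nat. inst_w k j = real q * (2 * inst_w k i)"
    using inst_w_multiple[OF k2] by auto
  then obtain q :: "nat \<Rightarrow> nat" where q: "\<forall>j\<in>{1..<i}. inst_w k j = real (q j) * (2 * inst_w k i)"
    by metis
  have "real (\<Sum>j\<in>{1..<i}. inst_n k j * q j)
        = (\<Sum>j\<in>{1..<i}. real (inst_n k j) * inst_w k j) / (2 * inst_w k i)"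
    using q inst_w_pos[of k i] by (simp add: sum_divide_distrib)
  also have "\<dots> = real (inst_n k i div 2)"
    using sum_inst_n_mult_inst_w_below[of i k] inst_w_pos[of k i] even_inst_n[of k i] k2 i2
    by (simp add: real_of_nat_div)
  finally have "card (B i) = (\<Sum>j\<in>{1..<i}. inst_n k j * q j)"
    using card_B[OF i2] by linarith
  from exists_partition_with_cards[OF finite_atLeastLessThan finite_B[OF i2] this]
  obtain P where P: "\<forall>j\<in>{1..<i}. P j \<subseteq> B i \<and> card (P j) = inst_n k j * q j"
    "disjoint_family_on P {1..<i}" "(\<Union>j\<in>{1..<i}. P j) = B i"
    by blast
  have parts: "\<forall>j\<in>{1..<i}. allocable_within (c a) w (G j) (P j)"
  proof
    fix j assume j: "j \<in> {1..<i}"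
    have j1: "j \<in> {1..k}" using j i2 by auto
    have "\<forall>e\<in>P j. c a e = 2 * inst_w k i"
      using P(1) j i2 a c_B unfolding B_def by blast
    then show "allocable_within (c a) w (G j) (P j)"
      using j j1 P(1) G_card w_G q inst_w_pos[of k j] finite_subset[OF _ finite_B[OF i2]]
      by (intro allocable_within_uniform[where q = "\<lambda>_. q j"]) auto
  qed
  have "disjoint_family_on G {1..<i}"
    using i2 by (intro disjoint_family_on_mono[OF _ G_disj]) auto
  from allocable_within_UN[OF finite_atLeastLessThan this P(2) parts]
  show ?thesis
    using P(3) by simp
qed

lemma allocable_lower_blocks:
  "allocable_within (c a) w (\<Union>j\<in>{1..i}. G j) (\<Union>j\<in>{1..i}. Ms j)"
proof (cases "i = 1")
  case True
  have "allocable_within (c a) w (G i) (Ms i)"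
    using True a finite_G[OF i] card_G[OF i] weight_G[OF i] Ms1_card c_1_1
    by (intro allocable_within_uniform[where q = "\<lambda>_. 1"]) (auto simp: inst_m_def inst_n_def inst_w_def)
  then show ?thesis using True by simp
next
  case False
  then have i2: "i \<in> {2..k}" using i by auto
  have "allocable_within (c a) w (G i) (M2 i)"
    using i2 a finite_G[OF i] card_G[OF i] weight_G[OF i] M2_card c_M2 inst_w_pos[of k i]
    by (intro allocable_within_uniform[where q = "\<lambda>_. 1"]) auto
  then have "allocable_within (c a) w ((\<Union>j\<in>{1..<i}. G j) \<union> G i) (B i \<union> M2 i)"
    using allocable_B[OF i2] lower_blocks_disjoint_parts[OF i2] disjoint_family_on_UN_below[OF G_disj i]
    by (intro allocable_within_Un) auto
  then have "allocable_within (c a) w ((\<Union>j\<in>{1..<i}. G j) \<union> G i) (B i \<union> M2 i \<union> (M1 i - T i))"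
    by (rule allocable_within_add_free_items)
      (use a i2 c_T' finite_B finite_M1_M2 lower_blocks_disjoint_parts[OF i2] in auto)
  moreover have "{1..i} = insert i {1..<i}"
    using i by auto
  ultimately show ?thesis
    unfolding lower_blocks_eq[OF i2] by (simp add: Un_ac)
qed

lemma total_cost_eq_total_weight: "sum (c a) M = sum w N"
proof -
  have split: "{1..k} = {1..i} \<union> {i<..k}" "{1..i} \<inter> {i<..k} = {}"
    using i by auto
  have low: "(\<Sum>j\<in>{1..i}. sum (c a) (Ms j)) = (\<Sum>j\<in>{1..i}. real (inst_n k j) * inst_w k j)"
  proof -
    have "(\<Sum>j\<in>{1..i}. sum (c a) (Ms j)) = sum (c a) (\<Union>j\<in>{1..i}. Ms j)"
      using i by (intro sum_cost_blocks[symmetric]) auto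
    then show ?thesis
      using cost_lower_blocks by simp
  qed
  have high: "(\<Sum>j\<in>{i<..k}. sum (c a) (Ms j)) = (\<Sum>j\<in>{i<..k}. real (inst_n k j) * inst_w k j)"
    using cost_higher_block by simp
  have "sum (c a) M = (\<Sum>j\<in>{1..k}. sum (c a) (Ms j))"
    unfolding M_def by (rule sum_cost_blocks) simp
  also have "\<dots> = (\<Sum>j\<in>{1..k}. real (inst_n k j) * inst_w k j)"
    unfolding split(1) using split(2) low high by (simp add: sum.union_disjoint)
  also have "\<dots> = sum w N"
    unfolding N_def by (rule sum_weight_groups[symmetric]) simp
  finally show ?thesis .
qed

lemma allocable_all: "allocable_within (c a) w N M"
proof -
  have split: "{1..k} = {1..i} \<union> {i<..k}" "{1..i} \<inter> {i<..k} = {}"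
    "{1..i} \<subseteq> {1..k}" "{i<..k} \<subseteq> {1..k}"
    using i by auto
  have "allocable_within (c a) w (\<Union>j\<in>{i<..k}. G j) (\<Union>j\<in>{i<..k}. Ms j)"
    using allocable_higher_block disjoint_family_on_mono[OF split(4) G_disj]
      disjoint_family_on_mono[OF split(4) Ms_disj]
    by (intro allocable_within_UN) auto
  then show ?thesis
    unfolding N_def M_def split(1) UN_Un
    using allocable_lower_blocks disjoint_family_on_UN_disjoint[OF G_disj split(3,4,2)]
      disjoint_family_on_UN_disjoint[OF Ms_disj split(3,4,2)]
    by (intro allocable_within_Un) auto
qed

lemma wmms_group_member: "wmms N M w c a = inst_w k i"
proof -
  have "wmms N M w c a = w a"
    using finite_N finite_M weight_pos allocable_all total_cost_eq_total_weight i a N_def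
    by (intro wmms_eq_weight) auto
  then show ?thesis
    using weight_G[OF i a] by simp
qed

end

end

theorem mainTheorem10:
  fixes k :: nat
    and N :: "'ag set" and G :: "nat \<Rightarrow> 'ag set"
    and M :: "'it set" and Ms M1 M2 T :: "nat \<Rightarrow> 'it set"
    and w :: "'ag \<Rightarrow> real" and c :: "'ag \<Rightarrow> 'it \<Rightarrow> real"
  assumes k2: "k \<ge> 2"
    and N_def: "N = (\<Union>i\<in>{1..k}. G i)"
    and G_disj: "disjoint_family_on G {1..k}"
    and G_card: "\<forall>i\<in>{1..k}. finite (G i) \<and> card (G i) = inst_n k i"
    and w_G: "\<forall>i\<in>{1..k}. \<forall>a\<in>G i. w a = inst_w k i"
    and M_def: "M = (\<Union>i\<in>{1..k}. Ms i)"
    and Ms_disj: "disjoint_family_on Ms {1..k}"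
    and Ms1_card: "finite (Ms 1) \<and> card (Ms 1) = inst_m k 1"
    and Ms_split: "\<forall>i\<in>{2..k}. Ms i = M1 i \<union> M2 i \<and> M1 i \<inter> M2 i = {}"
    and M1_card: "\<forall>i\<in>{2..k}. finite (M1 i) \<and> card (M1 i) = inst_n k i div 2"
    and M2_card: "\<forall>i\<in>{2..k}. finite (M2 i) \<and> card (M2 i) = inst_n k i"
    and T_sub: "\<forall>i\<in>{2..k}. T i \<subseteq> M1 i \<and>
                  card (T i) = inst_n k i div 2 - (\<Sum>j\<in>{1..<i}. inst_m k j)"
    and c_1_1: "\<forall>a\<in>G 1. \<forall>e\<in>Ms 1. c a e = 1"
    and c_lt1: "\<forall>i\<in>{2..k}. \<forall>j\<in>{1..<i}. \<forall>a\<in>G j. \<forall>e\<in>M1 i. c a e = inst_w k i"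
    and c_lt2: "\<forall>i\<in>{2..k}. \<forall>j\<in>{1..<i}. \<forall>a\<in>G j. \<forall>e\<in>M2 i. c a e = inst_w k i / 2"
    and c_B: "\<forall>i\<in>{2..k}. \<forall>a\<in>G i.
                \<forall>e\<in>(\<Union>j\<in>{1..<i}. Ms j) \<union> T i. c a e = 2 * inst_w k i"
    and c_T': "\<forall>i\<in>{2..k}. \<forall>a\<in>G i. \<forall>e\<in>M1 i - T i. c a e = 0"
    and c_M2: "\<forall>i\<in>{2..k}. \<forall>a\<in>G i. \<forall>e\<in>M2 i. c a e = inst_w k i"
  shows "\<forall>i\<in>{1..k}. \<forall>a\<in>G i. wmms N M w c a = inst_w k i"
proof -
  interpret wmms_instance k N G M Ms M1 M2 T w c
    using assms by (rule wmms_instance.intro)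
  show ?thesis
    using wmms_group_member by blast
qed

end
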